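(* Let $[\lambda]$ be a nilpotent critical point of $F_m:\mathcal A_m\to\mathbb R$ and let $\mathcal S\subset\Gamma(\lambda)$ be a subalgebra such that $(\Phi^*,\Psi^* )\in\mathcal S$ for every $(\Phi,\Psi)\in\mathcal S$. Then $\mathcal S$ is a semisimple associative algebra.
   Context: $\lambda:\mathbb C^m\times\mathbb C^m\to\mathbb C^m$ is an associative algebra, nilpotent (i.e. $\lambda$-products of some fixed length $k$ all vanish), and $\mathbb C^m$ has its standard Hermitian inner product, $^*$ denoting adjoint; $[\lambda]$ is a critical point of $F_m$, meaning $\mathrm M_\lambda=c_\lambda I+D_\lambda$ with $c_\lambda\in\mathbb R$ and $D_\lambda$ a derivation, where $\mathrm M_\lambda=2\sum_i L^\lambda_{X_i}(L^\lambda_{X_i})^*-2\sum_i (L^\lambda_{X_i})^*L^\lambda_{X_i}-2\sum_i (R^\lambda_{X_i})^*R^\lambda_{X_i}$, $L^\lambda_XY=\lambda(X,Y)$, $R^\lambda_XY=\lambda(Y,X)$, $\{X_i\}$ orthonormal. Define $L(\lambda)=\{\Phi\in\mathrm{End}(\mathbb C^m):\Phi(\lambda(X,Y))=\lambda(\Phi X,Y)\ \forall X,Y\}$, $R(\lambda)=\{\Psi\in\mathrm{End}(\mathbb C^m):\Psi(\lambda(X,Y))=\lambda(X,\Psi Y)\ \forall X,Y\}$, $\Gamma_l=\{\Phi\in L(\lambda):[\Phi,\Psi]=0\ \forall\Psi\in R(\lambda)\}$, $\Gamma_r=\{\Psi\in R(\lambda):[\Phi,\Psi]=0\ \forall\Phi\in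 L(\lambda)\}$, and $\Gamma(\lambda)=\{(\Phi,\Psi)\in\Gamma_l\times\Gamma_r:\lambda(X,\Phi Y)=\lambda(\Psi X,Y)\ \forall X,Y\}$, an associative algebra under $(\Phi_1,\Psi_1)(\Phi_2,\Psi_2)=(\Phi_1\Phi_2,\Psi_2\Psi_1)$. Semisimple means the radical (largest nilpotent ideal) is zero. *)

theory Defs
  imports "Jordan_Normal_Form.Schur_Decomposition"
begin

text \<open>Algebras on C^m are bilinear maps lam on carrier_vec m; endomorphisms of C^m are
  complex m x m matrices; the adjoint w.r.t. the standard Hermitian product is mat_adjoint
  (conjugate transpose); the standard basis unit_vec m i is orthonormal.\<close>

definition bilinear_on :: "nat \<Rightarrow> (complex vec \<Rightarrow> complex vec \<Rightarrow> complex vec) \<Rightarrow> bool" where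
  "bilinear_on m lam \<longleftrightarrow>
     (\<forall>x\<in>carrier_vec m. \<forall>y\<in>carrier_vec m. lam x y \<in> carrier_vec m) \<and>
     (\<forall>x\<in>carrier_vec m. \<forall>y\<in>carrier_vec m. \<forall>z\<in>carrier_vec m.
        lam (x + y) z = lam x z + lam y z \<and> lam z (x + y) = lam z x + lam z y) \<and>
     (\<forall>a::complex. \<forall>x\<in>carrier_vec m. \<forall>y\<in>carrier_vec m.
        lam (a \<cdot>\<^sub>v x) y = a \<cdot>\<^sub>v lam x y \<and> lam x (a \<cdot>\<^sub>v y) = a \<cdot>\<^sub>v lam x y)"

definition associative_on :: "nat \<Rightarrow> (complex vec \<Rightarrow> complex vec \<Rightarrow> complex vec) \<Rightarrow> bool" where
  "associative_on m lam \<longleftrightarrow>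
     (\<forall>x\<in>carrier_vec m. \<forall>y\<in>carrier_vec m. \<forall>z\<in>carrier_vec m.
        lam (lam x y) z = lam x (lam y z))"

text \<open>Nilpotent: for some k, all products of k+1 elements vanish
  (by associativity the bracketing is irrelevant; we use left-nested products).\<close>
definition nilpotent_alg :: "nat \<Rightarrow> (complex vec \<Rightarrow> complex vec \<Rightarrow> complex vec) \<Rightarrow> bool" where
  "nilpotent_alg m lam \<longleftrightarrow>
     (\<exists>k. \<forall>x ys. x \<in> carrier_vec m \<and> set ys \<subseteq> carrier_vec m \<and> length ys = k
        \<longrightarrow> foldl lam x ys = 0\<^sub>v m)"

definition Lmat :: "nat \<Rightarrow> (complex vec \<Rightarrow> complex vec \<Rightarrow> complex vec) \<Rightarrow> complex vec \<Rightarrow> complex mat" where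
  "Lmat m lam X = mat m m (\<lambda>(i, j). lam X (unit_vec m j) $ i)"

definition Rmat :: "nat \<Rightarrow> (complex vec \<Rightarrow> complex vec \<Rightarrow> complex vec) \<Rightarrow> complex vec \<Rightarrow> complex mat" where
  "Rmat m lam X = mat m m (\<lambda>(i, j). lam (unit_vec m j) X $ i)"

definition msum :: "nat \<Rightarrow> (nat \<Rightarrow> complex mat) \<Rightarrow> complex mat" where
  "msum m f = foldr (\<lambda>i acc. f i + acc) [0..<m] (0\<^sub>m m m)"

definition Mmat :: "nat \<Rightarrow> (complex vec \<Rightarrow> complex vec \<Rightarrow> complex vec) \<Rightarrow> complex mat" where
  "Mmat m lam =
     (2 \<cdot>\<^sub>m msum m (\<lambda>i. Lmat m lam (unit_vec m i) * mat_adjoint (Lmat m lam (unit_vec m i))))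
   - (2 \<cdot>\<^sub>m msum m (\<lambda>i. mat_adjoint (Lmat m lam (unit_vec m i)) * Lmat m lam (unit_vec m i)))
   - (2 \<cdot>\<^sub>m msum m (\<lambda>i. mat_adjoint (Rmat m lam (unit_vec m i)) * Rmat m lam (unit_vec m i)))"

definition is_derivation :: "nat \<Rightarrow> (complex vec \<Rightarrow> complex vec \<Rightarrow> complex vec) \<Rightarrow> complex mat \<Rightarrow> bool" where
  "is_derivation m lam D \<longleftrightarrow> D \<in> carrier_mat m m \<and>
     (\<forall>X\<in>carrier_vec m. \<forall>Y\<in>carrier_vec m. D *\<^sub>v lam X Y = lam (D *\<^sub>v X) Y + lam X (D *\<^sub>v Y))"

definition critical_point :: "nat \<Rightarrow> (complex vec \<Rightarrow> complex vec \<Rightarrow> complex vec) \<Rightarrow> bool" where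
  "critical_point m lam \<longleftrightarrow>
     (\<exists>c::real. \<exists>D. is_derivation m lam D \<and> Mmat m lam = complex_of_real c \<cdot>\<^sub>m 1\<^sub>m m + D)"

definition Lset :: "nat \<Rightarrow> (complex vec \<Rightarrow> complex vec \<Rightarrow> complex vec) \<Rightarrow> complex mat set" where
  "Lset m lam = {P \<in> carrier_mat m m.
     \<forall>X\<in>carrier_vec m. \<forall>Y\<in>carrier_vec m. P *\<^sub>v lam X Y = lam (P *\<^sub>v X) Y}"

definition Rset :: "nat \<Rightarrow> (complex vec \<Rightarrow> complex vec \<Rightarrow> complex vec) \<Rightarrow> complex mat set" where
  "Rset m lam = {Q \<in> carrier_mat m m.
     \<forall>X\<in>carrier_vec m. \<forall>Y\<in>carrier_vec m. Q *\<^sub>v lam X Y = lam X (Q *\<^sub>v Y)}"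

definition Gamma_l :: "nat \<Rightarrow> (complex vec \<Rightarrow> complex vec \<Rightarrow> complex vec) \<Rightarrow> complex mat set" where
  "Gamma_l m lam = {P \<in> Lset m lam. \<forall>Q\<in>Rset m lam. P * Q = Q * P}"

definition Gamma_r :: "nat \<Rightarrow> (complex vec \<Rightarrow> complex vec \<Rightarrow> complex vec) \<Rightarrow> complex mat set" where
  "Gamma_r m lam = {Q \<in> Rset m lam. \<forall>P\<in>Lset m lam. P * Q = Q * P}"

definition Gamma :: "nat \<Rightarrow> (complex vec \<Rightarrow> complex vec \<Rightarrow> complex vec) \<Rightarrow> (complex mat \<times> complex mat) set" where
  "Gamma m lam = {(P, Q). P \<in> Gamma_l m lam \<and> Q \<in> Gamma_r m lam \<and>
     (\<forall>X\<in>carrier_vec m. \<forall>Y\<in>carrier_vec m. lam X (P *\<^sub>v Y) = lam (Q *\<^sub>v X) Y)}"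

definition pmult :: "complex mat \<times> complex mat \<Rightarrow> complex mat \<times> complex mat \<Rightarrow> complex mat \<times> complex mat" where
  "pmult a b = (fst a * fst b, snd b * snd a)"

definition padd :: "complex mat \<times> complex mat \<Rightarrow> complex mat \<times> complex mat \<Rightarrow> complex mat \<times> complex mat" where
  "padd a b = (fst a + fst b, snd a + snd b)"

definition psmult :: "complex \<Rightarrow> complex mat \<times> complex mat \<Rightarrow> complex mat \<times> complex mat" where
  "psmult c a = (c \<cdot>\<^sub>m fst a, c \<cdot>\<^sub>m snd a)"

definition pzero :: "nat \<Rightarrow> complex mat \<times> complex mat" where
  "pzero m = (0\<^sub>m m m, 0\<^sub>m m m)"

definition csubspace_p :: "nat \<Rightarrow> (complex mat \<times> complex mat) set \<Rightarrow> bool" where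
  "csubspace_p m S \<longleftrightarrow> pzero m \<in> S \<and> (\<forall>a\<in>S. \<forall>b\<in>S. padd a b \<in> S) \<and>
     (\<forall>c. \<forall>a\<in>S. psmult c a \<in> S)"

definition subalgebra_of :: "nat \<Rightarrow> (complex mat \<times> complex mat) set \<Rightarrow> (complex mat \<times> complex mat) set \<Rightarrow> bool" where
  "subalgebra_of m S A \<longleftrightarrow> S \<subseteq> A \<and> csubspace_p m S \<and> (\<forall>a\<in>S. \<forall>b\<in>S. pmult a b \<in> S)"

definition ideal_of :: "nat \<Rightarrow> (complex mat \<times> complex mat) set \<Rightarrow> (complex mat \<times> complex mat) set \<Rightarrow> bool" where
  "ideal_of m I S \<longleftrightarrow> I \<subseteq> S \<and> csubspace_p m I \<and>
     (\<forall>s\<in>S. \<forall>a\<in>I. pmult s a \<in> I \<and> pmult a s \<in> I)"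

definition nilpotent_set :: "nat \<Rightarrow> (complex mat \<times> complex mat) set \<Rightarrow> bool" where
  "nilpotent_set m I \<longleftrightarrow>
     (\<exists>k. \<forall>x ys. x \<in> I \<and> set ys \<subseteq> I \<and> length ys = k \<longrightarrow> foldl pmult x ys = pzero m)"

text \<open>Semisimple: the radical (largest nilpotent ideal) is zero, i.e. every nilpotent
  two-sided ideal is zero.\<close>
definition semisimple_p :: "nat \<Rightarrow> (complex mat \<times> complex mat) set \<Rightarrow> bool" where
  "semisimple_p m S \<longleftrightarrow> (\<forall>I. ideal_of m I S \<and> nilpotent_set m I \<longrightarrow> I = {pzero m})"

end

theory Submission
  imports Defs
begin

text \<open>For \<open>(P, Q)\<close> in a nilpotent ideal
  \<open>I\<close> of \<open>S\<close>, the product \<open>(P\<^sup>*, Q\<^sup>*) (P, Q) = (P\<^sup>* P, Q Q\<^sup>*)\<close> lies in \<open>I\<close>, so both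
  components are nilpotent Hermitian matrices. A nilpotent Hermitian matrix vanishes, since
  \<open>H\<^sup>* H = 0\<close> forces \<open>H = 0\<close>; hence \<open>P\<^sup>* P = 0\<close> and \<open>Q Q\<^sup>* = 0\<close>, and so \<open>P = Q = 0\<close>.\<close>

lemma dim_mat_adjoint [simp]:
  "dim_row (mat_adjoint A) = dim_col A" "dim_col (mat_adjoint A) = dim_row A"
  unfolding mat_adjoint_def by (simp_all only: mat_of_rows_carrier length_map cols_length)

lemma mat_adjoint_carrier_mat [simp]: "A \<in> carrier_mat n n \<Longrightarrow> mat_adjoint A \<in> carrier_mat n n"
  unfolding carrier_mat_def by (simp only: dim_mat_adjoint mem_Collect_eq)

lemma index_mat_adjoint:
  "A \<in> carrier_mat n n \<Longrightarrow> i < n \<Longrightarrow> j < n \<Longrightarrow> mat_adjoint A $$ (i, j) = cnj (A $$ (j, i))"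
  unfolding mat_adjoint_def carrier_mat_def by (subst mat_of_rows_index) simp_all

lemma row_mat_adjoint:
  "A \<in> carrier_mat n n \<Longrightarrow> j < n \<Longrightarrow> row (mat_adjoint A) j = conjugate (col A j)"
  unfolding mat_adjoint_def by (subst mat_of_rows_row) (simp_all add: cols_length)

lemma mat_adjoint_adjoint:
  assumes "(A :: complex mat) \<in> carrier_mat n n"
  shows "mat_adjoint (mat_adjoint A) = A"
proof (rule eq_matI)
  fix i j assume "i < dim_row A" "j < dim_col A"
  with assms show "mat_adjoint (mat_adjoint A) $$ (i, j) = A $$ (i, j)"
    by (simp add: index_mat_adjoint[of _ n])
qed (use assms in auto)

lemma mat_adjoint_one: "mat_adjoint (1\<^sub>m n :: complex mat) = 1\<^sub>m n"
  by (rule eq_matI) (auto simp: index_mat_adjoint[of "1\<^sub>m n" n])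

lemma mat_adjoint_mult:
  assumes A: "(A :: complex mat) \<in> carrier_mat n n" and B: "B \<in> carrier_mat n n"
  shows "mat_adjoint (A * B) = mat_adjoint B * mat_adjoint A"
proof (rule eq_matI)
  fix i j
  assume "i < dim_row (mat_adjoint B * mat_adjoint A)" "j < dim_col (mat_adjoint B * mat_adjoint A)"
  with A B have "i < n" "j < n" by auto
  with A B show "mat_adjoint (A * B) $$ (i, j) = (mat_adjoint B * mat_adjoint A) $$ (i, j)"
    by (simp add: index_mat_adjoint[OF mult_carrier_mat[OF A B]] index_mat_adjoint[OF A]
        index_mat_adjoint[OF B] scalar_prod_def cnj_sum mult.commute)
qed (use A B in auto)

lemma mat_adjoint_mult_self_eq_zero:
  assumes A: "(A :: complex mat) \<in> carrier_mat n n" and zero: "mat_adjoint A * A = 0\<^sub>m n n"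
  shows "A = 0\<^sub>m n n"
proof (rule eq_matI)
  fix i j assume "i < dim_row (0\<^sub>m n n :: complex mat)" "j < dim_col (0\<^sub>m n n :: complex mat)"
  then have i: "i < n" and j: "j < n" by auto
  have c: "col A j \<in> carrier_vec n" using A by auto
  \<comment> \<open>the diagonal entry \<open>(A\<^sup>* A)\<^sub>j\<^sub>j\<close> is the squared norm of the \<open>j\<close>-th column\<close>
  have "conjugate (col A j) \<bullet> col A j = (mat_adjoint A * A) $$ (j, j)"
    using A j by (simp add: row_mat_adjoint)
  then have "col A j \<bullet>c col A j = 0"
    using zero j conjugate_vec_sprod_comm[OF c c] by simp
  then have "col A j = 0\<^sub>v n" using c by simp
  moreover have "A $$ (i, j) = col A j $ i" using A i j by simp
  ultimately show "A $$ (i, j) = 0\<^sub>m n n $$ (i, j)" using i j by simp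
qed (use A in auto)

lemma mat_mult_adjoint_self_eq_zero:
  assumes A: "(A :: complex mat) \<in> carrier_mat n n" and zero: "A * mat_adjoint A = 0\<^sub>m n n"
  shows "A = 0\<^sub>m n n"
proof -
  have "mat_adjoint (mat_adjoint A) * mat_adjoint A = 0\<^sub>m n n"
    using zero by (simp add: mat_adjoint_adjoint[OF A])
  then have "mat_adjoint A = 0\<^sub>m n n"
    by (rule mat_adjoint_mult_self_eq_zero[OF mat_adjoint_carrier_mat[OF A]])
  then have "mat_adjoint A * A = 0\<^sub>m n n" using A by simp
  then show ?thesis by (rule mat_adjoint_mult_self_eq_zero[OF A])
qed

lemma pow_mat_Suc_left:
  assumes A: "A \<in> carrier_mat n n"
  shows "A ^\<^sub>m Suc k = A * A ^\<^sub>m k"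
proof (induction k)
  case 0
  show ?case using A by simp
next
  case (Suc k)
  have "A ^\<^sub>m Suc (Suc k) = (A * A ^\<^sub>m k) * A" using Suc by simp
  also have "\<dots> = A * (A ^\<^sub>m k * A)" by (rule assoc_mult_mat[OF A pow_carrier_mat[OF A] A])
  finally show ?case by simp
qed

lemma pow_mat_add:
  assumes A: "A \<in> carrier_mat n n"
  shows "A ^\<^sub>m (a + b) = A ^\<^sub>m a * A ^\<^sub>m b"
proof (induction b)
  case 0
  show ?case using A by simp
next
  case (Suc b)
  have "A ^\<^sub>m (a + Suc b) = (A ^\<^sub>m a * A ^\<^sub>m b) * A" using Suc by simp
  also have "\<dots> = A ^\<^sub>m a * (A ^\<^sub>m b * A)"
    by (rule assoc_mult_mat[OF pow_carrier_mat[OF A] pow_carrier_mat[OF A] A])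
  finally show ?case by simp
qed

lemma mat_adjoint_pow_hermitian:
  assumes H: "(H :: complex mat) \<in> carrier_mat n n" and herm: "mat_adjoint H = H"
  shows "mat_adjoint (H ^\<^sub>m k) = H ^\<^sub>m k"
proof (induction k)
  case 0
  show ?case using H by (simp add: mat_adjoint_one)
next
  case (Suc k)
  have "mat_adjoint (H ^\<^sub>m Suc k) = mat_adjoint (H ^\<^sub>m k * H)" by simp
  also have "\<dots> = mat_adjoint H * mat_adjoint (H ^\<^sub>m k)"
    by (rule mat_adjoint_mult[OF pow_carrier_mat[OF H] H])
  also have "\<dots> = H ^\<^sub>m Suc k" using Suc herm pow_mat_Suc_left[OF H, of k] by simp
  finally show ?case .
qed

lemma hermitian_nilpotent_eq_zero:
  assumes H: "(H :: complex mat) \<in> carrier_mat n n" and herm: "mat_adjoint H = H"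
    and nilpotent: "H ^\<^sub>m Suc k = 0\<^sub>m n n"
  shows "H = 0\<^sub>m n n"
  using nilpotent
proof (induction k)
  case 0
  then show ?case using H by simp
next
  case (Suc k)
  let ?G = "H ^\<^sub>m Suc k"
  \<comment> \<open>\<open>G\<^sup>* G = H\<^bsup>2k+2\<^esup>\<close> is a multiple of \<open>H\<^bsup>k+2\<^esup>\<close>, so \<open>G = 0\<close>\<close>
  have "mat_adjoint ?G * ?G = H ^\<^sub>m (Suc (Suc k) + k)"
    using H herm by (simp add: mat_adjoint_pow_hermitian pow_mat_add[symmetric] del: pow_mat.simps)
  also have "\<dots> = H ^\<^sub>m Suc (Suc k) * H ^\<^sub>m k" using H by (rule pow_mat_add)
  also have "\<dots> = 0\<^sub>m n n" using H Suc.prems by (simp del: pow_mat.simps)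
  finally have "?G = 0\<^sub>m n n" by (rule mat_adjoint_mult_self_eq_zero[OF pow_carrier_mat[OF H]])
  then show ?case by (rule Suc.IH)
qed

lemma foldl_pmult_replicate:
  assumes "A \<in> carrier_mat n n" and "B \<in> carrier_mat n n"
  shows "foldl pmult (A, B) (replicate k (A, B)) = (A ^\<^sub>m Suc k, B ^\<^sub>m Suc k)"
proof (induction k)
  case 0
  show ?case using assms by simp
next
  case (Suc k)
  have "foldl pmult (A, B) (replicate (Suc k) (A, B))
      = pmult (foldl pmult (A, B) (replicate k (A, B))) (A, B)"
    by (simp only: replicate_Suc replicate_append_same[symmetric] foldl_append foldl_Cons foldl_Nil)
  also have "\<dots> = (A ^\<^sub>m Suc k * A, B * B ^\<^sub>m Suc k)"
    by (simp add: Suc pmult_def del: pow_mat.simps)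
  finally show ?case
    by (simp only: pow_mat.simps(2)[symmetric] pow_mat_Suc_left[OF assms(2), symmetric])
qed

lemma semisimple_p_if_closed_under_adjoint:
  assumes carrier: "S \<subseteq> carrier_mat m m \<times> carrier_mat m m"
    and adjoint_closed: "\<forall>(P, Q)\<in>S. (mat_adjoint P, mat_adjoint Q) \<in> S"
  shows "semisimple_p m S"
  unfolding semisimple_p_def
proof (intro allI impI)
  fix I assume "ideal_of m I S \<and> nilpotent_set m I"
  then have "I \<subseteq> S" and zero_in: "pzero m \<in> I"
    and left_ideal: "\<And>s a. s \<in> S \<Longrightarrow> a \<in> I \<Longrightarrow> pmult s a \<in> I"
    and "nilpotent_set m I"
    unfolding ideal_of_def csubspace_p_def by auto
  then obtain k where nil:
    "\<And>x ys. x \<in> I \<Longrightarrow> set ys \<subseteq> I \<Longrightarrow> length ys = k \<Longrightarrow> foldl pmult x ys = pzero m"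
    unfolding nilpotent_set_def by blast
  have "(P, Q) = pzero m" if PQ: "(P, Q) \<in> I" for P Q
  proof -
    have P: "P \<in> carrier_mat m m" and Q: "Q \<in> carrier_mat m m"
      using PQ \<open>I \<subseteq> S\<close> carrier by auto
    define H1 where "H1 = mat_adjoint P * P"
    define H2 where "H2 = Q * mat_adjoint Q"
    have H1: "H1 \<in> carrier_mat m m" and H2: "H2 \<in> carrier_mat m m"
      using P Q by (auto simp: H1_def H2_def)
    have "(H1, H2) = pmult (mat_adjoint P, mat_adjoint Q) (P, Q)"
      by (simp add: pmult_def H1_def H2_def)
    also have "\<dots> \<in> I" using left_ideal adjoint_closed PQ \<open>I \<subseteq> S\<close> by blast
    finally have "foldl pmult (H1, H2) (replicate k (H1, H2)) = pzero m"
      by (intro nil) auto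
    then have "H1 ^\<^sub>m Suc k = 0\<^sub>m m m" "H2 ^\<^sub>m Suc k = 0\<^sub>m m m"
      by (simp_all add: foldl_pmult_replicate[OF H1 H2] pzero_def del: pow_mat.simps)
    moreover have "mat_adjoint H1 = H1" "mat_adjoint H2 = H2"
      using mat_adjoint_mult[OF mat_adjoint_carrier_mat[OF P] P]
        mat_adjoint_mult[OF Q mat_adjoint_carrier_mat[OF Q]]
      by (simp_all add: H1_def H2_def mat_adjoint_adjoint[OF P] mat_adjoint_adjoint[OF Q])
    ultimately have "H1 = 0\<^sub>m m m" "H2 = 0\<^sub>m m m"
      using H1 H2 hermitian_nilpotent_eq_zero by blast+
    then have "P = 0\<^sub>m m m" "Q = 0\<^sub>m m m"
      using mat_adjoint_mult_self_eq_zero[OF P] mat_mult_adjoint_self_eq_zero[OF Q]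
      unfolding H1_def H2_def by blast+
    then show ?thesis by (simp add: pzero_def)
  qed
  then show "I = {pzero m}" using zero_in by auto
qed

lemma Gamma_subset_carrier_mat: "Gamma m lam \<subseteq> carrier_mat m m \<times> carrier_mat m m"
  unfolding Gamma_def Gamma_l_def Gamma_r_def Lset_def Rset_def by auto

theorem lemma4p11:
  fixes m :: nat and lam :: "complex vec \<Rightarrow> complex vec \<Rightarrow> complex vec"
    and S :: "(complex mat \<times> complex mat) set"
  assumes "bilinear_on m lam"
    and "associative_on m lam"
    and "nilpotent_alg m lam"
    and "\<exists>X\<in>carrier_vec m. \<exists>Y\<in>carrier_vec m. lam X Y \<noteq> 0\<^sub>v m"
    and "critical_point m lam"
    and "subalgebra_of m S (Gamma m lam)"
    and "\<forall>(P, Q)\<in>S. (mat_adjoint P, mat_adjoint Q) \<in> S"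
  shows "semisimple_p m S"
proof (rule semisimple_p_if_closed_under_adjoint)
  show "S \<subseteq> carrier_mat m m \<times> carrier_mat m m"
    using assms(6) Gamma_subset_carrier_mat unfolding subalgebra_of_def by blast
qed (fact assms(7))

end
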